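(* The structure $\mathcal{X}_{\mathrm{PNA}}=(X,\sqsubseteq,\oplus,X)$ is a down-closed BI frame.
   Context: Fix a set $\mathrm{Var}$ of variables; values are real numbers. For finite $S\subseteq\mathrm{Var}$, $\mathrm{Mem}[S]$ is the set of maps $S\to\mathbb{R}$, ordered pointwise; $p_A(m)$ is restriction. $\mathcal{D}(Y)$ denotes countably supported probability distributions on $Y$; for $\mu\in\mathcal{D}(\mathrm{Mem}[S])$, $\mathrm{dom}(\mu)=S$ and $\pi_A\mu$ is the marginal on $A\subseteq S$. $X=\bigcup_{S\text{ finite}}\mathcal{D}(\mathrm{Mem}[S])$, and $\mu\sqsubseteq\mu'$ iff $\mathrm{dom}(\mu)\subseteq\mathrm{dom}(\mu')$ and $\pi_{\mathrm{dom}(\mu)}\mu'=\mu$. A partition is a set of pairwise disjoint nonempty sets; $\mathcal{T}$ coarsens $\mathcal{S}$ if $\bigcup\mathcal{T}=\bigcup\mathcal{S}$ and each element of $\mathcal{T}$ is a union of a subfamily of $\mathcal{S}$. For a partition $\mathcal{S}$ with $\bigcup\mathcal{S}\subseteq\mathrm{dom}(\mu)$, $\mu$ is $\mathcal{S}$-PNA if for every $\mathcal{T}$ coarsening $\mathcal{S}$ and every family $(f_A:\mathrm{Mem}[A]\to[0,\infty))_{A\in\mathcal{T}}$ all non-decreasing or all non-increasing, $\mathbb{E}_{m\sim\mu}[\prod_Af_A(p_Am)]\le\prod_A\mathbb{E}_{m\sim\mu}[f_A(p_Am)]$. For $\mu_1\in\mathcal{D}(\mathrm{Mem}[S])$, $\mu_2\in\mathcal{D}(\mathrm{Mem}[T])$,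 $\mu_1\oplus\mu_2$ is empty if $S\cap T\neq\emptyset$ and otherwise is the set of $\mu\in\mathcal{D}(\mathrm{Mem}[S\cup T])$ with $\pi_S\mu=\mu_1$, $\pi_T\mu=\mu_2$ such that $\mu$ is $(\mathcal{S}\cup\mathcal{T})$-PNA for all partitions $\mathcal{S}$ of a subset of $S$ and $\mathcal{T}$ of a subset of $T$ with $\mu_1$ $\mathcal{S}$-PNA and $\mu_2$ $\mathcal{T}$-PNA. A (down-closed) BI frame is a tuple $(X,\sqsubseteq,\oplus,E)$, $\sqsubseteq$ a preorder, $\oplus:X\times X\to\mathcal{P}(X)$, $E\subseteq X$, satisfying: (Down-Closed) $z\in x\oplus y$, $x'\sqsubseteq x$, $y'\sqsubseteq y$ imply some $z'\sqsubseteq z$ with $z'\in x'\oplus y'$; (Commutativity) $z\in x\oplus y\Rightarrow z\in y\oplus x$; (Associativity) $w\in t\oplus z$ and $t\in x\oplus y$ imply some $s\in y\oplus z$ with $w\in x\oplus s$; (Unit Existence) for each $x$ some $e\in E$ has $x\in e\oplus x$; (Unit Coherence) $e\in E$, $x\in y\oplus e\Rightarrow y\sqsubseteq x$; (Unit Closure) $e\in E$, $e\sqsubseteq e'\Rightarrow e'\in E$. *)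

theory Defs
  imports "HOL-Probability.Probability" "HOL-Library.FuncSet"
begin

text \<open>Memories over a finite set S of variables are represented as extensional
  functions (value undefined outside S).\<close>

definition Mem :: "'v set \<Rightarrow> ('v \<Rightarrow> real) set" where
  "Mem S = extensional S"

definition mem_le :: "'v set \<Rightarrow> ('v \<Rightarrow> real) \<Rightarrow> ('v \<Rightarrow> real) \<Rightarrow> bool" where
  "mem_le A m m' \<longleftrightarrow> (\<forall>x\<in>A. m x \<le> m' x)"

type_synonym 'v state = "'v set \<times> ('v \<Rightarrow> real) pmf"

definition XPNA :: "'v state set" where
  "XPNA = {(S, \<mu>). finite S \<and> set_pmf \<mu> \<subseteq> Mem S}"

definition marg :: "'v set \<Rightarrow> ('v \<Rightarrow> real) pmf \<Rightarrow> ('v \<Rightarrow> real) pmf" where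
  "marg A \<mu> = map_pmf (\<lambda>m. restrict m A) \<mu>"

definition le_PNA :: "'v state \<Rightarrow> 'v state \<Rightarrow> bool" where
  "le_PNA x y \<longleftrightarrow> fst x \<subseteq> fst y \<and> marg (fst x) (snd y) = snd x"

definition is_partition :: "'a set set \<Rightarrow> bool" where
  "is_partition P \<longleftrightarrow> (\<forall>A\<in>P. A \<noteq> {}) \<and> (\<forall>A\<in>P. \<forall>B\<in>P. A \<noteq> B \<longrightarrow> A \<inter> B = {})"

definition coarsens :: "'a set set \<Rightarrow> 'a set set \<Rightarrow> bool" where
  "coarsens T S \<longleftrightarrow> \<Union>T = \<Union>S \<and> (\<forall>A\<in>T. \<exists>U\<subseteq>S. A = \<Union>U)"

definition PNA :: "'v set \<Rightarrow> ('v \<Rightarrow> real) pmf \<Rightarrow> 'v set set \<Rightarrow> bool" where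
  "PNA D \<mu> \<S> \<longleftrightarrow> is_partition \<S> \<and> \<Union>\<S> \<subseteq> D \<and>
     (\<forall>\<T> F. is_partition \<T> \<and> coarsens \<T> \<S> \<and>
        (\<forall>A\<in>\<T>. \<forall>m\<in>Mem A. 0 \<le> F A m) \<and>
        ((\<forall>A\<in>\<T>. \<forall>m\<in>Mem A. \<forall>m'\<in>Mem A. mem_le A m m' \<longrightarrow> F A m \<le> F A m') \<or>
         (\<forall>A\<in>\<T>. \<forall>m\<in>Mem A. \<forall>m'\<in>Mem A. mem_le A m m' \<longrightarrow> F A m' \<le> F A m))
      \<longrightarrow> (\<integral>\<^sup>+ m. ennreal (\<Prod>A\<in>\<T>. F A (restrict m A)) \<partial>measure_pmf \<mu>)
          \<le> (\<Prod>A\<in>\<T>. \<integral>\<^sup>+ m. ennreal (F A (restrict m A)) \<partial>measure_pmf \<mu>))"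

definition oplus_PNA :: "'v state \<Rightarrow> 'v state \<Rightarrow> 'v state set" where
  "oplus_PNA x y =
    (if fst x \<inter> fst y \<noteq> {} then {}
     else {(fst x \<union> fst y, \<mu>) | \<mu>.
            set_pmf \<mu> \<subseteq> Mem (fst x \<union> fst y) \<and>
            marg (fst x) \<mu> = snd x \<and> marg (fst y) \<mu> = snd y \<and>
            (\<forall>\<S> \<T>. is_partition \<S> \<and> \<Union>\<S> \<subseteq> fst x \<and>
                    is_partition \<T> \<and> \<Union>\<T> \<subseteq> fst y \<and>
                    PNA (fst x) (snd x) \<S> \<and> PNA (fst y) (snd y) \<T>
                    \<longrightarrow> PNA (fst x \<union> fst y) \<mu> (\<S> \<union> \<T>))})"

definition BI_frame :: "'a set \<Rightarrow> ('a \<Rightarrow> 'a \<Rightarrow> bool) \<Rightarrow> ('a \<Rightarrow> 'a \<Rightarrow> 'a set) \<Rightarrow> 'a set \<Rightarrow> bool" where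
  "BI_frame Xc le op E \<longleftrightarrow>
     (\<forall>x\<in>Xc. le x x) \<and>
     (\<forall>x\<in>Xc. \<forall>y\<in>Xc. \<forall>z\<in>Xc. le x y \<longrightarrow> le y z \<longrightarrow> le x z) \<and>
     (\<forall>x\<in>Xc. \<forall>y\<in>Xc. op x y \<subseteq> Xc) \<and>
     E \<subseteq> Xc \<and>
     (\<forall>x\<in>Xc. \<forall>y\<in>Xc. \<forall>z\<in>Xc. \<forall>x'\<in>Xc. \<forall>y'\<in>Xc.
        z \<in> op x y \<longrightarrow> le x' x \<longrightarrow> le y' y \<longrightarrow> (\<exists>z'\<in>Xc. le z' z \<and> z' \<in> op x' y')) \<and>
     (\<forall>x\<in>Xc. \<forall>y\<in>Xc. \<forall>z\<in>Xc. z \<in> op x y \<longrightarrow> z \<in> op y x) \<and>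
     (\<forall>w\<in>Xc. \<forall>t\<in>Xc. \<forall>x\<in>Xc. \<forall>y\<in>Xc. \<forall>z\<in>Xc.
        w \<in> op t z \<longrightarrow> t \<in> op x y \<longrightarrow> (\<exists>s\<in>Xc. s \<in> op y z \<and> w \<in> op x s)) \<and>
     (\<forall>x\<in>Xc. \<exists>e\<in>E. x \<in> op e x) \<and>
     (\<forall>e\<in>E. \<forall>x\<in>Xc. \<forall>y\<in>Xc. x \<in> op y e \<longrightarrow> le y x) \<and>
     (\<forall>e\<in>E. \<forall>e'\<in>Xc. le e e' \<longrightarrow> e' \<in> E)"

end

(* The order is "is a marginal of", and PNA of a distribution for a partition depends only on
   its marginal on the union of the blocks; hence all frame axioms except associativity are
   bookkeeping with marginals.  For associativity, w \<in> t \<oplus> z with t \<in> x \<oplus> y is split as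
   w \<in> x \<oplus> s, where s is the marginal of w on dom y \<union> dom z.  Given PNA partitions \<S> of x and \<U> of s, the traces of \<U> on
   dom y and on dom z are PNA partitions of y and z, so w is PNA for \<S> together with both traces,
   and \<S> \<union> \<U> coarsens that partition.  The two closure properties used -- PNA survives coarsening and
   tracing the blocks on a set -- both come from carrying a monotone test family along an
   injection into the blocks of a coarsening of the original partition. *)

theory Submission
  imports Defs
begin

section \<open>Memories and marginals\<close>

lemma restrict_in_Mem: "restrict m A \<in> Mem A"
  by (simp add: Mem_def)

lemma mem_le_restrict: "mem_le B m m' \<Longrightarrow> A \<subseteq> B \<Longrightarrow> mem_le A (restrict m A) (restrict m' A)"
  by (auto simp: mem_le_def)

lemma XPNA_iff: "(S, \<mu>) \<in> XPNA \<longleftrightarrow> finite S \<and> set_pmf \<mu> \<subseteq> Mem S"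
  by (simp add: XPNA_def)

lemma marg_self: "set_pmf \<mu> \<subseteq> Mem S \<Longrightarrow> marg S \<mu> = \<mu>"
  unfolding marg_def Mem_def by (rule map_pmf_idI) (auto intro: extensional_restrict)

lemma marg_marg: "A \<subseteq> B \<Longrightarrow> marg A (marg B \<mu>) = marg A \<mu>"
  unfolding marg_def map_pmf_comp by (simp add: Int_absorb1)

lemma set_pmf_marg: "set_pmf (marg A \<mu>) \<subseteq> Mem A"
  unfolding marg_def Mem_def by auto

lemma nn_integral_marg:
  "(\<integral>\<^sup>+ m. f m \<partial>measure_pmf (marg D \<mu>)) = (\<integral>\<^sup>+ m. f (restrict m D) \<partial>measure_pmf \<mu>)"
  by (simp add: marg_def)

lemma le_PNA_iff: "le_PNA (S, \<mu>) (T, \<nu>) \<longleftrightarrow> S \<subseteq> T \<and> marg S \<nu> = \<mu>"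
  by (simp add: le_PNA_def)

lemma le_PNA_marg: "S \<subseteq> T \<Longrightarrow> le_PNA (S, marg S \<nu>) (T, \<nu>)"
  by (simp add: le_PNA_iff)

section \<open>Partitions and coarsenings\<close>

lemma is_partition_nonempty: "is_partition \<P> \<Longrightarrow> A \<in> \<P> \<Longrightarrow> A \<noteq> {}"
  by (simp add: is_partition_def)

lemma is_partition_eq: "is_partition \<P> \<Longrightarrow> A \<in> \<P> \<Longrightarrow> B \<in> \<P> \<Longrightarrow> x \<in> A \<Longrightarrow> x \<in> B \<Longrightarrow> A = B"
  unfolding is_partition_def by blast

lemma is_partitionI:
  "(\<And>A. A \<in> \<P> \<Longrightarrow> A \<noteq> {}) \<Longrightarrow> (\<And>A B x. A \<in> \<P> \<Longrightarrow> B \<in> \<P> \<Longrightarrow> x \<in> A \<Longrightarrow> x \<in> B \<Longrightarrow> A = B)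
    \<Longrightarrow> is_partition \<P>"
  unfolding is_partition_def by blast

lemma is_partition_Un:
  assumes "is_partition \<P>" "is_partition \<Q>" "\<Union>\<P> \<inter> \<Union>\<Q> = {}"
  shows "is_partition (\<P> \<union> \<Q>)"
  using is_partition_nonempty[OF assms(1)] is_partition_nonempty[OF assms(2)]
    is_partition_eq[OF assms(1)] is_partition_eq[OF assms(2)] assms(3)
  by (intro is_partitionI) blast+

lemma is_partition_restrict:
  "is_partition \<P> \<Longrightarrow> is_partition {B \<inter> Y | B. B \<in> \<P> \<and> B \<inter> Y \<noteq> {}}"
  by (intro is_partitionI) (blast dest: is_partition_eq)+

lemma finite_partition: "finite D \<Longrightarrow> \<Union>\<P> \<subseteq> D \<Longrightarrow> finite \<P>"
  by (meson finite_UnionD finite_subset)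

lemma coarsensD: "coarsens \<T> \<Q> \<Longrightarrow> A \<in> \<T> \<Longrightarrow> \<exists>\<U>\<subseteq>\<Q>. A = \<Union>\<U>"
  unfolding coarsens_def by (elim conjE) (rule bspec)

lemma coarsens_trans:
  assumes \<T>: "coarsens \<T> \<Q>" and \<Q>: "coarsens \<Q> \<P>"
  shows "coarsens \<T> \<P>"
  unfolding coarsens_def
proof (intro conjI ballI)
  show "\<Union>\<T> = \<Union>\<P>" using assms by (simp add: coarsens_def)
  fix A assume "A \<in> \<T>"
  then obtain \<U> where \<U>: "\<U> \<subseteq> \<Q>" "A = \<Union>\<U>"
    using coarsensD[OF \<T>] by blast
  have split: "\<forall>q\<in>\<U>. \<exists>\<V>. \<V> \<subseteq> \<P> \<and> \<Union>\<V> = q"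
    using coarsensD[OF \<Q>] \<U>(1) by (metis subsetD)
  obtain f where f: "\<forall>q\<in>\<U>. f q \<subseteq> \<P> \<and> \<Union>(f q) = q" using bchoice[OF split] by blast
  have "\<Union>(\<Union>q\<in>\<U>. f q) = (\<Union>q\<in>\<U>. \<Union>(f q))" by blast
  also have "\<dots> = A" using f \<U>(2) by simp
  finally show "\<exists>\<V>\<subseteq>\<P>. A = \<Union>\<V>"
    using f by (intro exI[of _ "\<Union>q\<in>\<U>. f q"]) auto
qed

lemma coarsens_block_subset:
  assumes "coarsens \<T> \<Q>" "is_partition \<Q>" "q \<in> \<Q>" "A \<in> \<T>" "q \<inter> A \<noteq> {}"
  shows "q \<subseteq> A"
proof -
  obtain \<U> where \<U>: "\<U> \<subseteq> \<Q>" "A = \<Union>\<U>" using coarsensD[OF assms(1,4)] by blast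
  obtain x where "x \<in> q" "x \<in> A" using assms(5) by blast
  then obtain u where "u \<in> \<U>" "x \<in> u" using \<U>(2) by blast
  then have "q = u" using is_partition_eq[OF assms(2) assms(3) _ \<open>x \<in> q\<close>] \<U>(1) by blast
  then show ?thesis using \<open>u \<in> \<U>\<close> \<U>(2) by blast
qed

lemma coarsens_split:
  assumes "\<Union>\<U> \<subseteq> Y \<union> Z"
  shows "coarsens (\<S> \<union> \<U>) (\<S> \<union> {B \<inter> Y | B. B \<in> \<U> \<and> B \<inter> Y \<noteq> {}} \<union> {B \<inter> Z | B. B \<in> \<U> \<and> B \<inter> Z \<noteq> {}})"
    (is "coarsens _ ?\<P>")
  unfolding coarsens_def
proof (intro conjI ballI)
  show "\<Union>(\<S> \<union> \<U>) = \<Union>?\<P>"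
  proof
    show "\<Union>(\<S> \<union> \<U>) \<subseteq> \<Union>?\<P>"
    proof
      fix x assume "x \<in> \<Union>(\<S> \<union> \<U>)"
      then obtain B where B: "B \<in> \<S> \<union> \<U>" "x \<in> B" by blast
      show "x \<in> \<Union>?\<P>"
      proof (cases "B \<in> \<S>")
        case True then show ?thesis using B by blast
      next
        case False
        then have "B \<in> \<U>" using B by blast
        then have "x \<in> Y \<or> x \<in> Z" using assms B by blast
        then show ?thesis using B \<open>B \<in> \<U>\<close> by blast
      qed
    qed
    show "\<Union>?\<P> \<subseteq> \<Union>(\<S> \<union> \<U>)" by blast
  qed
  fix A assume "A \<in> \<S> \<union> \<U>"
  then consider "A \<in> \<S>" | "A \<in> \<U>" by blast
  then show "\<exists>\<V>\<subseteq>?\<P>. A = \<Union>\<V>"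
  proof cases
    case 1 then show ?thesis by (intro exI[of _ "{A}"]) blast
  next
    case 2
    have AYZ: "A \<subseteq> Y \<union> Z" using assms 2 by blast
    show ?thesis
    proof (intro exI[of _ "{A \<inter> Y, A \<inter> Z} - {{}}"] conjI)
      show "{A \<inter> Y, A \<inter> Z} - {{}} \<subseteq> ?\<P>" using 2 by blast
      show "A = \<Union>({A \<inter> Y, A \<inter> Z} - {{}})" using AYZ by blast
    qed
  qed
qed

definition saturation :: "'a set set \<Rightarrow> 'a set \<Rightarrow> 'a set" where
  "saturation \<P> A = \<Union>{B\<in>\<P>. B \<inter> A \<noteq> {}}"

lemma saturation_partition:
  assumes \<P>: "is_partition \<P>" and \<T>: "is_partition \<T>" "\<Union>\<T> \<subseteq> \<Union>\<P>"
    and meets_one: "\<And>B A A'. B \<in> \<P> \<Longrightarrow> A \<in> \<T> \<Longrightarrow> A' \<in> \<T> \<Longrightarrow> B \<inter> A \<noteq> {} \<Longrightarrow> B \<inter> A' \<noteq> {} \<Longrightarrow> A = A'"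
  defines "\<T>' \<equiv> saturation \<P> ` \<T> \<union> {B\<in>\<P>. \<forall>A\<in>\<T>. B \<inter> A = {}}"
  shows "is_partition \<T>'" "coarsens \<T>' \<P>" "inj_on (saturation \<P>) \<T>" "\<forall>A\<in>\<T>. A \<subseteq> saturation \<P> A"
proof -
  have owner: "B \<inter> A \<noteq> {}" if x: "x \<in> saturation \<P> A" and B: "B \<in> \<P>" "x \<in> B" for x A B
  proof -
    obtain B' where "B' \<in> \<P>" "x \<in> B'" "B' \<inter> A \<noteq> {}" using x unfolding saturation_def by blast
    then show ?thesis using is_partition_eq[OF \<P> B(1) \<open>B' \<in> \<P>\<close> B(2)] by simp
  qed
  have sat_eq: "A = A'"
    if A: "A \<in> \<T>" "A' \<in> \<T>" and x: "x \<in> saturation \<P> A" "x \<in> saturation \<P> A'" for A A' x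
  proof -
    obtain B where "B \<in> \<P>" "x \<in> B" "B \<inter> A \<noteq> {}" using x(1) unfolding saturation_def by blast
    then show ?thesis using meets_one A owner[OF x(2)] by blast
  qed
  show sub: "\<forall>A\<in>\<T>. A \<subseteq> saturation \<P> A"
  proof (intro ballI subsetI)
    fix A x assume "A \<in> \<T>" "x \<in> A"
    then obtain B where "B \<in> \<P>" "x \<in> B" using \<T>(2) by blast
    then show "x \<in> saturation \<P> A" using \<open>x \<in> A\<close> unfolding saturation_def by blast
  qed
  have sat_ne: "\<exists>x. x \<in> saturation \<P> A" if "A \<in> \<T>" for A
    using is_partition_nonempty[OF \<T>(1) that] sub that by blast
  show "inj_on (saturation \<P>) \<T>"
  proof (rule inj_onI)
    fix A A' assume "A \<in> \<T>" "A' \<in> \<T>" "saturation \<P> A = saturation \<P> A'"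
    then show "A = A'" using sat_ne sat_eq by metis
  qed
  show "is_partition \<T>'"
  proof (rule is_partitionI)
    show "C \<noteq> {}" if "C \<in> \<T>'" for C
      using that sat_ne is_partition_nonempty[OF \<P>] unfolding \<T>'_def by blast
    fix C C' x assume C: "C \<in> \<T>'" "C' \<in> \<T>'" "x \<in> C" "x \<in> C'"
    have block: "(\<exists>A\<in>\<T>. D = saturation \<P> A) \<or> (D \<in> \<P> \<and> (\<forall>A\<in>\<T>. D \<inter> A = {}))"
      if "D \<in> \<T>'" for D
      using that unfolding \<T>'_def by blast
    have not_both: False
      if "A \<in> \<T>" "x \<in> saturation \<P> A" "D \<in> \<P>" "\<forall>A\<in>\<T>. D \<inter> A = {}" "x \<in> D" for A D
      using owner[OF that(2,3,5)] that(1,4) by blast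
    from block[OF C(1)] block[OF C(2)] show "C = C'"
    proof (elim disjE bexE conjE)
      fix A A' assume "A \<in> \<T>" "C = saturation \<P> A" "A' \<in> \<T>" "C' = saturation \<P> A'"
      then show ?thesis using sat_eq C(3,4) by blast
    next
      fix A assume "A \<in> \<T>" "C = saturation \<P> A" "C' \<in> \<P>" "\<forall>A\<in>\<T>. C' \<inter> A = {}"
      then show ?thesis using not_both C(3,4) by blast
    next
      fix A assume "A \<in> \<T>" "C' = saturation \<P> A" "C \<in> \<P>" "\<forall>A\<in>\<T>. C \<inter> A = {}"
      then show ?thesis using not_both C(3,4) by blast
    next
      assume "C \<in> \<P>" "C' \<in> \<P>"
      then show ?thesis using is_partition_eq[OF \<P>] C(3,4) by blast
    qed
  qed
  show "coarsens \<T>' \<P>"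
    unfolding coarsens_def
  proof (intro conjI ballI)
    have sat_sub: "saturation \<P> A \<subseteq> \<Union>\<P>" for A
      unfolding saturation_def by blast
    have cover: "B \<subseteq> \<Union>\<T>'" if "B \<in> \<P>" for B
    proof (cases "\<exists>A\<in>\<T>. B \<inter> A \<noteq> {}")
      case True
      then obtain A where "A \<in> \<T>" "B \<inter> A \<noteq> {}" by blast
      then have "B \<subseteq> saturation \<P> A" using that unfolding saturation_def by blast
      then show ?thesis using \<open>A \<in> \<T>\<close> unfolding \<T>'_def by blast
    next
      case False
      then show ?thesis using that unfolding \<T>'_def by blast
    qed
    show "\<Union>\<T>' = \<Union>\<P>"
    proof
      show "\<Union>\<T>' \<subseteq> \<Union>\<P>" using sat_sub unfolding \<T>'_def by blast
      show "\<Union>\<P> \<subseteq> \<Union>\<T>'" using cover by blast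
    qed
    fix C assume "C \<in> \<T>'"
    then consider A where "C = saturation \<P> A" | "C \<in> \<P>"
      unfolding \<T>'_def by blast
    then show "\<exists>\<V>\<subseteq>\<P>. C = \<Union>\<V>"
    proof cases
      case 1
      then show ?thesis unfolding saturation_def by (intro exI[of _ "{B\<in>\<P>. B \<inter> A \<noteq> {}}"]) simp
    next
      case 2
      then show ?thesis by (intro exI[of _ "{C}"]) simp
    qed
  qed
qed

section \<open>Negative association\<close>

definition monotone_family ::
    "'v set set \<Rightarrow> (real \<Rightarrow> real \<Rightarrow> bool) \<Rightarrow> ('v set \<Rightarrow> ('v \<Rightarrow> real) \<Rightarrow> real) \<Rightarrow> bool" where
  "monotone_family \<T> R F \<longleftrightarrow> (\<forall>A\<in>\<T>. \<forall>m\<in>Mem A. \<forall>m'\<in>Mem A. mem_le A m m' \<longrightarrow> R (F A m) (F A m'))"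

definition PNA_test_family :: "'v set set \<Rightarrow> ('v set \<Rightarrow> ('v \<Rightarrow> real) \<Rightarrow> real) \<Rightarrow> bool" where
  "PNA_test_family \<T> F \<longleftrightarrow> (\<forall>A\<in>\<T>. \<forall>m\<in>Mem A. 0 \<le> F A m) \<and>
     (monotone_family \<T> (\<le>) F \<or> monotone_family \<T> (\<ge>) F)"

lemma PNA_iff:
  "PNA D \<mu> \<S> \<longleftrightarrow> is_partition \<S> \<and> \<Union>\<S> \<subseteq> D \<and>
     (\<forall>\<T> F. is_partition \<T> \<longrightarrow> coarsens \<T> \<S> \<longrightarrow> PNA_test_family \<T> F \<longrightarrow>
        (\<integral>\<^sup>+ m. ennreal (\<Prod>A\<in>\<T>. F A (restrict m A)) \<partial>measure_pmf \<mu>)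
          \<le> (\<Prod>A\<in>\<T>. \<integral>\<^sup>+ m. ennreal (F A (restrict m A)) \<partial>measure_pmf \<mu>))"
  unfolding PNA_def PNA_test_family_def monotone_family_def by blast

lemma PNA_partition: "PNA D \<mu> \<S> \<Longrightarrow> is_partition \<S>"
  and PNA_subset: "PNA D \<mu> \<S> \<Longrightarrow> \<Union>\<S> \<subseteq> D"
  by (simp_all add: PNA_iff)

lemma PNA_ineq:
  "PNA D \<mu> \<S> \<Longrightarrow> is_partition \<T> \<Longrightarrow> coarsens \<T> \<S> \<Longrightarrow> PNA_test_family \<T> F \<Longrightarrow>
     (\<integral>\<^sup>+ m. ennreal (\<Prod>A\<in>\<T>. F A (restrict m A)) \<partial>measure_pmf \<mu>)
       \<le> (\<Prod>A\<in>\<T>. \<integral>\<^sup>+ m. ennreal (F A (restrict m A)) \<partial>measure_pmf \<mu>)"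
  unfolding PNA_iff by blast

lemma PNA_I:
  assumes "is_partition \<S>" "\<Union>\<S> \<subseteq> D"
    and "\<And>\<T> F. is_partition \<T> \<Longrightarrow> coarsens \<T> \<S> \<Longrightarrow> PNA_test_family \<T> F \<Longrightarrow>
      (\<integral>\<^sup>+ m. ennreal (\<Prod>A\<in>\<T>. F A (restrict m A)) \<partial>measure_pmf \<mu>)
        \<le> (\<Prod>A\<in>\<T>. \<integral>\<^sup>+ m. ennreal (F A (restrict m A)) \<partial>measure_pmf \<mu>)"
  shows "PNA D \<mu> \<S>"
  using assms unfolding PNA_iff by blast

definition transport_family ::
    "('v set \<Rightarrow> 'v set) \<Rightarrow> 'v set set \<Rightarrow> ('v set \<Rightarrow> ('v \<Rightarrow> real) \<Rightarrow> real) \<Rightarrow> 'v set \<Rightarrow> ('v \<Rightarrow> real) \<Rightarrow> real"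
  where "transport_family h \<T> F C m =
    (if C \<in> h ` \<T> then F (the_inv_into \<T> h C) (restrict m (the_inv_into \<T> h C)) else 1)"

lemma transport_family_image:
  assumes "inj_on h \<T>" "A \<in> \<T>" "A \<subseteq> h A"
  shows "transport_family h \<T> F (h A) (restrict m (h A)) = F A (restrict m A)"
  using assms by (simp add: transport_family_def the_inv_into_f_f Int_absorb1)

lemma monotone_family_transport:
  fixes \<T>' :: "'v set set"
  assumes h: "inj_on h \<T>" "\<forall>A\<in>\<T>. A \<subseteq> h A" and F: "monotone_family \<T> R F" and "R 1 1"
  shows "monotone_family \<T>' R (transport_family h \<T> F)"
  unfolding monotone_family_def
proof (intro ballI impI)
  fix C :: "'v set" and m m' assume "mem_le C m m'"
  show "R (transport_family h \<T> F C m) (transport_family h \<T> F C m')"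
  proof (cases "C \<in> h ` \<T>")
    case True
    then obtain A where A: "A \<in> \<T>" "C = h A" by blast
    have "mem_le A (restrict m A) (restrict m' A)"
      using mem_le_restrict \<open>mem_le C m m'\<close> h(2) A by blast
    then show ?thesis
      using F A unfolding monotone_family_def transport_family_def
      by (simp add: the_inv_into_f_f[OF h(1)] restrict_in_Mem)
  qed (simp add: transport_family_def \<open>R 1 1\<close>)
qed

lemma PNA_test_family_transport:
  fixes \<T>' :: "'v set set"
  assumes h: "inj_on h \<T>" "\<forall>A\<in>\<T>. A \<subseteq> h A" and F: "PNA_test_family \<T> F"
  shows "PNA_test_family \<T>' (transport_family h \<T> F)"
proof -
  have "0 \<le> transport_family h \<T> F C m" for C m
    using F by (auto simp: PNA_test_family_def transport_family_def the_inv_into_f_f[OF h(1)] restrict_in_Mem)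
  then show ?thesis
    using F monotone_family_transport[OF h] unfolding PNA_test_family_def by auto
qed

lemma prod_inj_image_neutral:
  assumes "finite \<T>'" "h ` \<T> \<subseteq> \<T>'" "inj_on h \<T>" "\<And>C. C \<in> \<T>' - h ` \<T> \<Longrightarrow> \<phi> C = 1"
  shows "prod \<phi> \<T>' = (\<Prod>A\<in>\<T>. \<phi> (h A))"
proof -
  have "prod \<phi> \<T>' = prod \<phi> (h ` \<T>)"
    using assms by (intro prod.mono_neutral_right) auto
  also have "\<dots> = (\<Prod>A\<in>\<T>. \<phi> (h A))"
    using assms(3) by (simp add: prod.reindex)
  finally show ?thesis .
qed

text \<open>A test family for a coarsening \<T> of \<Q> is carried along h to a test family for the
  coarsening \<T>' of \<P> with the same product and the same expectations.\<close>

lemma PNA_refine: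
  assumes "finite D" and \<P>: "PNA D \<mu> \<P>" and \<Q>: "is_partition \<Q>" "\<Union>\<Q> \<subseteq> D"
    and refine: "\<And>\<T>. is_partition \<T> \<Longrightarrow> coarsens \<T> \<Q> \<Longrightarrow> \<exists>\<T>' h. is_partition \<T>' \<and> coarsens \<T>' \<P> \<and>
      inj_on h \<T> \<and> h ` \<T> \<subseteq> \<T>' \<and> (\<forall>A\<in>\<T>. A \<subseteq> h A)"
  shows "PNA D \<mu> \<Q>"
proof (rule PNA_I[OF \<Q>])
  fix \<T> and F :: "'a set \<Rightarrow> ('a \<Rightarrow> real) \<Rightarrow> real"
  assume \<T>: "is_partition \<T>" "coarsens \<T> \<Q>" and F: "PNA_test_family \<T> F"
  obtain \<T>' h where \<T>': "is_partition \<T>'" "coarsens \<T>' \<P>"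
    and h: "inj_on h \<T>" "h ` \<T> \<subseteq> \<T>'" "\<forall>A\<in>\<T>. A \<subseteq> h A"
    using refine[OF \<T>] by blast
  let ?G = "transport_family h \<T> F"
  have "\<Union>\<T>' \<subseteq> D" using \<T>'(2) PNA_subset[OF \<P>] by (simp add: coarsens_def)
  then have "finite \<T>'" using \<open>finite D\<close> finite_partition by blast
  have lhs: "(\<Prod>C\<in>\<T>'. ?G C (restrict m C)) = (\<Prod>A\<in>\<T>. F A (restrict m A))" for m
  proof -
    have "(\<Prod>C\<in>\<T>'. ?G C (restrict m C)) = (\<Prod>A\<in>\<T>. ?G (h A) (restrict m (h A)))"
      using \<open>finite \<T>'\<close> h by (intro prod_inj_image_neutral) (auto simp: transport_family_def)
    also have "\<dots> = (\<Prod>A\<in>\<T>. F A (restrict m A))"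
      using h by (intro prod.cong) (auto simp: transport_family_image)
    finally show ?thesis .
  qed
  have rhs: "(\<Prod>C\<in>\<T>'. \<integral>\<^sup>+ m. ennreal (?G C (restrict m C)) \<partial>measure_pmf \<mu>)
      = (\<Prod>A\<in>\<T>. \<integral>\<^sup>+ m. ennreal (F A (restrict m A)) \<partial>measure_pmf \<mu>)"
  proof -
    have "(\<Prod>C\<in>\<T>'. \<integral>\<^sup>+ m. ennreal (?G C (restrict m C)) \<partial>measure_pmf \<mu>)
      = (\<Prod>A\<in>\<T>. \<integral>\<^sup>+ m. ennreal (?G (h A) (restrict m (h A))) \<partial>measure_pmf \<mu>)"
      using \<open>finite \<T>'\<close> h
      by (intro prod_inj_image_neutral) (auto simp: transport_family_def measure_pmf.emeasure_space_1)
    also have "\<dots> = (\<Prod>A\<in>\<T>. \<integral>\<^sup>+ m. ennreal (F A (restrict m A)) \<partial>measure_pmf \<mu>)"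
      using h by (intro prod.cong) (auto simp: transport_family_image)
    finally show ?thesis .
  qed
  show "(\<integral>\<^sup>+ m. ennreal (\<Prod>A\<in>\<T>. F A (restrict m A)) \<partial>measure_pmf \<mu>)
      \<le> (\<Prod>A\<in>\<T>. \<integral>\<^sup>+ m. ennreal (F A (restrict m A)) \<partial>measure_pmf \<mu>)"
    using PNA_ineq[OF \<P> \<T>' PNA_test_family_transport[OF h(1,3) F]] unfolding lhs rhs .
qed

lemma PNA_coarsen:
  assumes \<P>: "PNA D \<mu> \<P>" and \<Q>: "is_partition \<Q>" "coarsens \<Q> \<P>"
  shows "PNA D \<mu> \<Q>"
proof (rule PNA_I[OF \<Q>(1)])
  show "\<Union>\<Q> \<subseteq> D" using \<Q>(2) PNA_subset[OF \<P>] by (simp add: coarsens_def)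
  fix \<T> and F :: "'a set \<Rightarrow> ('a \<Rightarrow> real) \<Rightarrow> real"
  assume "is_partition \<T>" "coarsens \<T> \<Q>" "PNA_test_family \<T> F"
  then show "(\<integral>\<^sup>+ m. ennreal (\<Prod>A\<in>\<T>. F A (restrict m A)) \<partial>measure_pmf \<mu>)
      \<le> (\<Prod>A\<in>\<T>. \<integral>\<^sup>+ m. ennreal (F A (restrict m A)) \<partial>measure_pmf \<mu>)"
    using PNA_ineq[OF \<P>] coarsens_trans[OF _ \<Q>(2)] by blast
qed

lemma PNA_restrict:
  assumes "finite D" and \<P>: "PNA D \<mu> \<P>"
  shows "PNA D \<mu> {B \<inter> Y | B. B \<in> \<P> \<and> B \<inter> Y \<noteq> {}}" (is "PNA D \<mu> ?\<Q>")
proof (rule PNA_refine[OF assms])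
  have \<P>_part: "is_partition \<P>" using PNA_partition[OF \<P>] .
  show \<Q>_part: "is_partition ?\<Q>" using is_partition_restrict[OF \<P>_part] .
  show "\<Union>?\<Q> \<subseteq> D" using PNA_subset[OF \<P>] by blast
  fix \<T> assume \<T>: "is_partition \<T>" "coarsens \<T> ?\<Q>"
  have \<T>_Un: "\<Union>\<T> = \<Union>?\<Q>" using \<T>(2) by (simp add: coarsens_def)
  have \<T>_Y: "A \<subseteq> Y" if "A \<in> \<T>" for A using \<T>_Un that by blast
  have within: "B \<inter> Y \<subseteq> A" if "B \<in> \<P>" "A \<in> \<T>" "B \<inter> A \<noteq> {}" for B A
  proof (rule coarsens_block_subset[OF \<T>(2) \<Q>_part])
    show "B \<inter> Y \<inter> A \<noteq> {}" using that(2,3) \<T>_Y by blast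
    then show "B \<inter> Y \<in> ?\<Q>" using that(1) by blast
  qed (fact that(2))
  have meets_one: "A = A'"
    if B: "B \<in> \<P>" and A: "A \<in> \<T>" "A' \<in> \<T>" and meets: "B \<inter> A \<noteq> {}" "B \<inter> A' \<noteq> {}"
    for B A A'
  proof -
    obtain x where "x \<in> B" "x \<in> A" using meets(1) by blast
    then have "x \<in> A'" using within[OF B A(2) meets(2)] \<T>_Y[OF A(1)] by blast
    then show ?thesis using is_partition_eq[OF \<T>(1) A \<open>x \<in> A\<close>] by simp
  qed
  have "\<Union>\<T> \<subseteq> \<Union>\<P>" using \<T>_Un by blast
  note sat = saturation_partition[OF \<P>_part \<T>(1) this meets_one]
  show "\<exists>\<T>' h. is_partition \<T>' \<and> coarsens \<T>' \<P> \<and> inj_on h \<T> \<and> h ` \<T> \<subseteq> \<T>' \<and> (\<forall>A\<in>\<T>. A \<subseteq> h A)"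
    using sat by (intro exI[of _ "saturation \<P> ` \<T> \<union> {B\<in>\<P>. \<forall>A\<in>\<T>. B \<inter> A = {}}"]
        exI[of _ "saturation \<P>"]) auto
qed

lemma PNA_marg_iff:
  assumes "\<Union>\<P> \<subseteq> S" "S \<subseteq> D"
  shows "PNA S (marg S \<mu>) \<P> \<longleftrightarrow> PNA D \<mu> \<P>"
proof -
  have "restrict (restrict m S) A = restrict m A" if "coarsens \<T> \<P>" "A \<in> \<T>" for \<T> A and m :: "'a \<Rightarrow> real"
  proof -
    have "A \<subseteq> \<Union>\<P>" using that by (auto simp: coarsens_def)
    then show ?thesis using assms(1) by (simp add: Int_absorb1 subset_trans)
  qed
  then have "coarsens \<T> \<P> \<Longrightarrow>
      (\<integral>\<^sup>+ m. ennreal (\<Prod>A\<in>\<T>. F A (restrict m A)) \<partial>measure_pmf (marg S \<mu>))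
        = (\<integral>\<^sup>+ m. ennreal (\<Prod>A\<in>\<T>. F A (restrict m A)) \<partial>measure_pmf \<mu>) \<and>
      (\<Prod>A\<in>\<T>. \<integral>\<^sup>+ m. ennreal (F A (restrict m A)) \<partial>measure_pmf (marg S \<mu>))
        = (\<Prod>A\<in>\<T>. \<integral>\<^sup>+ m. ennreal (F A (restrict m A)) \<partial>measure_pmf \<mu>)"
    for \<T> and F :: "'a set \<Rightarrow> ('a \<Rightarrow> real) \<Rightarrow> real"
    unfolding nn_integral_marg by (simp cong: prod.cong)
  then show ?thesis using assms unfolding PNA_iff by auto
qed

lemma PNA_le_PNA_iff: "le_PNA (S, \<mu>) (T, \<nu>) \<Longrightarrow> \<Union>\<P> \<subseteq> S \<Longrightarrow> PNA S \<mu> \<P> \<longleftrightarrow> PNA T \<nu> \<P>"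
  unfolding le_PNA_iff using PNA_marg_iff by blast

text \<open>The partition side conditions in the definition of oplus_PNA are implied by PNA.\<close>

lemma oplus_PNA_iff:
  "(D, \<nu>) \<in> oplus_PNA (S, \<mu>) (T, \<rho>) \<longleftrightarrow> S \<inter> T = {} \<and> D = S \<union> T \<and> set_pmf \<nu> \<subseteq> Mem D \<and>
     marg S \<nu> = \<mu> \<and> marg T \<nu> = \<rho> \<and> (\<forall>\<S> \<T>. PNA S \<mu> \<S> \<longrightarrow> PNA T \<rho> \<T> \<longrightarrow> PNA D \<nu> (\<S> \<union> \<T>))"
  unfolding oplus_PNA_def by (auto; metis PNA_partition PNA_subset)

section \<open>The frame\<close>

lemma le_PNA_refl: "(S, \<mu>) \<in> XPNA \<Longrightarrow> le_PNA (S, \<mu>) (S, \<mu>)"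
  by (simp add: le_PNA_iff XPNA_iff marg_self)

lemma le_PNA_trans: "le_PNA (S, \<mu>) (T, \<nu>) \<Longrightarrow> le_PNA (T, \<nu>) (U, \<rho>) \<Longrightarrow> le_PNA (S, \<mu>) (U, \<rho>)"
  unfolding le_PNA_iff by (metis marg_marg subset_trans)

lemma oplus_PNA_le_left: "(D, \<nu>) \<in> oplus_PNA (S, \<mu>) (T, \<rho>) \<Longrightarrow> le_PNA (S, \<mu>) (D, \<nu>)"
  and oplus_PNA_le_right: "(D, \<nu>) \<in> oplus_PNA (S, \<mu>) (T, \<rho>) \<Longrightarrow> le_PNA (T, \<rho>) (D, \<nu>)"
  by (simp_all add: oplus_PNA_iff le_PNA_iff)

lemma oplus_PNA_closed:
  "(D, \<nu>) \<in> oplus_PNA (S, \<mu>) (T, \<rho>) \<Longrightarrow> (S, \<mu>) \<in> XPNA \<Longrightarrow> (T, \<rho>) \<in> XPNA \<Longrightarrow> (D, \<nu>) \<in> XPNA"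
  by (auto simp: oplus_PNA_iff XPNA_iff)

lemma oplus_PNA_commute: "(D, \<nu>) \<in> oplus_PNA (S, \<mu>) (T, \<rho>) \<Longrightarrow> (D, \<nu>) \<in> oplus_PNA (T, \<rho>) (S, \<mu>)"
  unfolding oplus_PNA_iff by (auto simp: Un_commute; metis Un_commute)

lemma oplus_PNA_unit: "(S, \<mu>) \<in> XPNA \<Longrightarrow> \<exists>e\<in>XPNA. (S, \<mu>) \<in> oplus_PNA e (S, \<mu>)"
proof
  let ?e = "({}, return_pmf (\<lambda>_. undefined))"
  show "?e \<in> XPNA" by (simp add: XPNA_def Mem_def extensional_def)
  assume "(S, \<mu>) \<in> XPNA"
  moreover have "marg {} \<mu> = return_pmf (\<lambda>_. undefined)"
    by (simp add: marg_def restrict_def)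
  moreover have PNA_empty_domain: "\<P> = {}" if "PNA {} \<nu> \<P>" for \<P> :: "'a set set" and \<nu>
    using PNA_partition[OF that] PNA_subset[OF that] by (auto simp: is_partition_def)
  ultimately show "(S, \<mu>) \<in> oplus_PNA ?e (S, \<mu>)"
    by (auto simp: oplus_PNA_iff XPNA_iff marg_self dest: PNA_empty_domain)
qed

lemma oplus_PNA_down_closed:
  assumes z: "(D, \<nu>) \<in> oplus_PNA (S, \<mu>) (T, \<rho>)"
    and x': "le_PNA (S', \<mu>') (S, \<mu>)" "(S', \<mu>') \<in> XPNA"
    and y': "le_PNA (T', \<rho>') (T, \<rho>)" "(T', \<rho>') \<in> XPNA"
  shows "\<exists>z'\<in>XPNA. le_PNA z' (D, \<nu>) \<and> z' \<in> oplus_PNA (S', \<mu>') (T', \<rho>')"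
proof (intro bexI conjI)
  let ?z' = "(S' \<union> T', marg (S' \<union> T') \<nu>)"
  have le_z: "le_PNA (S', \<mu>') (D, \<nu>)" "le_PNA (T', \<rho>') (D, \<nu>)"
    using le_PNA_trans x'(1) y'(1) oplus_PNA_le_left[OF z] oplus_PNA_le_right[OF z] by blast+
  then have "S' \<union> T' \<subseteq> D" by (simp add: le_PNA_iff)
  then show le_z': "le_PNA ?z' (D, \<nu>)" by (rule le_PNA_marg)
  have "PNA (S' \<union> T') (marg (S' \<union> T') \<nu>) (\<S> \<union> \<T>)" if "PNA S' \<mu>' \<S>" "PNA T' \<rho>' \<T>" for \<S> \<T>
  proof -
    have "PNA S \<mu> \<S>" "PNA T \<rho> \<T>"
      using that PNA_le_PNA_iff x'(1) y'(1) PNA_subset by blast+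
    then have "PNA D \<nu> (\<S> \<union> \<T>)" using z by (auto simp: oplus_PNA_iff)
    moreover have "\<Union>(\<S> \<union> \<T>) \<subseteq> S' \<union> T'" using that PNA_subset by blast
    ultimately show ?thesis using PNA_le_PNA_iff[OF le_z'] by blast
  qed
  moreover have "S' \<inter> T' = {}"
    using x'(1) y'(1) z by (auto simp: le_PNA_iff oplus_PNA_iff)
  moreover have "marg S' (marg (S' \<union> T') \<nu>) = \<mu>'" "marg T' (marg (S' \<union> T') \<nu>) = \<rho>'"
    using le_z by (simp_all add: le_PNA_iff marg_marg)
  ultimately show "?z' \<in> oplus_PNA (S', \<mu>') (T', \<rho>')"
    by (simp add: oplus_PNA_iff set_pmf_marg)
  then show "?z' \<in> XPNA" using oplus_PNA_closed x'(2) y'(2) by blast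
qed

lemma oplus_PNA_assoc_right:
  assumes w: "(W, \<omega>) \<in> oplus_PNA (T, \<tau>) (Z, \<zeta>)" and t: "(T, \<tau>) \<in> oplus_PNA (X, \<xi>) (Y, \<eta>)"
  shows "(Y \<union> Z, marg (Y \<union> Z) \<omega>) \<in> oplus_PNA (Y, \<eta>) (Z, \<zeta>)"
proof -
  have le_t: "le_PNA (Y, \<eta>) (T, \<tau>)" using oplus_PNA_le_right[OF t] .
  have le_w: "le_PNA (T, \<tau>) (W, \<omega>)" "le_PNA (Z, \<zeta>) (W, \<omega>)"
    using oplus_PNA_le_left[OF w] oplus_PNA_le_right[OF w] .
  have YZ: "Y \<union> Z \<subseteq> W" using le_t le_w by (auto simp: le_PNA_iff)
  then have le_s: "le_PNA (Y \<union> Z, marg (Y \<union> Z) \<omega>) (W, \<omega>)" by (rule le_PNA_marg)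
  have "PNA (Y \<union> Z) (marg (Y \<union> Z) \<omega>) (\<S> \<union> \<U>)" if "PNA Y \<eta> \<S>" "PNA Z \<zeta> \<U>" for \<S> \<U>
  proof -
    have "PNA T \<tau> \<S>" using that(1) PNA_le_PNA_iff[OF le_t] PNA_subset by blast
    then have "PNA W \<omega> (\<S> \<union> \<U>)" using that(2) w by (auto simp: oplus_PNA_iff)
    moreover have "\<Union>(\<S> \<union> \<U>) \<subseteq> Y \<union> Z" using that PNA_subset by blast
    ultimately show ?thesis using PNA_le_PNA_iff[OF le_s] by blast
  qed
  moreover have "Y \<inter> Z = {}" using t w by (auto simp: oplus_PNA_iff)
  moreover have "marg Y (marg (Y \<union> Z) \<omega>) = \<eta>" "marg Z (marg (Y \<union> Z) \<omega>) = \<zeta>"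
    using le_PNA_trans[OF le_t le_w(1)] le_w(2) by (simp_all add: le_PNA_iff marg_marg)
  ultimately show ?thesis by (simp add: oplus_PNA_iff set_pmf_marg)
qed

lemma oplus_PNA_assoc_left:
  assumes w: "(W, \<omega>) \<in> oplus_PNA (T, \<tau>) (Z, \<zeta>)" and t: "(T, \<tau>) \<in> oplus_PNA (X, \<xi>) (Y, \<eta>)"
    and "finite W"
  shows "(W, \<omega>) \<in> oplus_PNA (X, \<xi>) (Y \<union> Z, marg (Y \<union> Z) \<omega>)"
proof -
  let ?\<sigma> = "marg (Y \<union> Z) \<omega>"
  have s: "(Y \<union> Z, ?\<sigma>) \<in> oplus_PNA (Y, \<eta>) (Z, \<zeta>)" using oplus_PNA_assoc_right[OF w t] .
  have doms: "T = X \<union> Y" "W = T \<union> Z" "X \<inter> Y = {}" "T \<inter> Z = {}"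
    using t w by (simp_all add: oplus_PNA_iff)
  have "PNA W \<omega> (\<S> \<union> \<U>)" if \<S>: "PNA X \<xi> \<S>" and \<U>: "PNA (Y \<union> Z) ?\<sigma> \<U>" for \<S> \<U>
  proof -
    define \<R> where "\<R> = {B \<inter> Y | B. B \<in> \<U> \<and> B \<inter> Y \<noteq> {}}"
    define \<Q> where "\<Q> = {B \<inter> Z | B. B \<in> \<U> \<and> B \<inter> Z \<noteq> {}}"
    have "finite (Y \<union> Z)" using \<open>finite W\<close> doms by simp
    then have "PNA (Y \<union> Z) ?\<sigma> \<R>" "PNA (Y \<union> Z) ?\<sigma> \<Q>"
      unfolding \<R>_def \<Q>_def using PNA_restrict[OF _ \<U>] by blast+
    moreover have "\<Union>\<R> \<subseteq> Y" "\<Union>\<Q> \<subseteq> Z" unfolding \<R>_def \<Q>_def by blast+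
    ultimately have \<R>: "PNA Y \<eta> \<R>" and \<Q>: "PNA Z \<zeta> \<Q>"
      using PNA_le_PNA_iff[OF oplus_PNA_le_left[OF s]] PNA_le_PNA_iff[OF oplus_PNA_le_right[OF s]] by blast+
    have "PNA T \<tau> (\<S> \<union> \<R>)" using t \<S> \<R> by (auto simp: oplus_PNA_iff)
    then have "PNA W \<omega> (\<S> \<union> \<R> \<union> \<Q>)" using w \<Q> by (auto simp: oplus_PNA_iff)
    moreover have "is_partition (\<S> \<union> \<U>)"
      using is_partition_Un[OF PNA_partition[OF \<S>] PNA_partition[OF \<U>]]
        PNA_subset[OF \<S>] PNA_subset[OF \<U>] doms by blast
    moreover have "coarsens (\<S> \<union> \<U>) (\<S> \<union> \<R> \<union> \<Q>)"
      unfolding \<R>_def \<Q>_def using coarsens_split PNA_subset[OF \<U>] by blast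
    ultimately show ?thesis by (rule PNA_coarsen)
  qed
  moreover have "X \<inter> (Y \<union> Z) = {}" "W = X \<union> (Y \<union> Z)" using doms by auto
  moreover have "marg X \<omega> = \<xi>"
    using le_PNA_trans[OF oplus_PNA_le_left[OF t] oplus_PNA_le_left[OF w]] by (simp add: le_PNA_iff)
  ultimately show ?thesis using w by (auto simp: oplus_PNA_iff)
qed

lemma oplus_PNA_assoc:
  assumes "(W, \<omega>) \<in> oplus_PNA (T, \<tau>) (Z, \<zeta>)" "(T, \<tau>) \<in> oplus_PNA (X, \<xi>) (Y, \<eta>)"
    and "(W, \<omega>) \<in> XPNA"
  shows "\<exists>s\<in>XPNA. s \<in> oplus_PNA (Y, \<eta>) (Z, \<zeta>) \<and> (W, \<omega>) \<in> oplus_PNA (X, \<xi>) s"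
proof -
  have "finite (Y \<union> Z)" "finite W" using assms by (auto simp: oplus_PNA_iff XPNA_iff)
  then show ?thesis
    using oplus_PNA_assoc_right[OF assms(1,2)] oplus_PNA_assoc_left[OF assms(1,2)]
    by (intro bexI[of _ "(Y \<union> Z, marg (Y \<union> Z) \<omega>)"]) (auto simp: XPNA_iff set_pmf_marg)
qed

theorem mainTheorem7:
  shows "BI_frame (XPNA :: 'v state set) le_PNA oplus_PNA XPNA"
  unfolding BI_frame_def
  by (auto simp: split_paired_all intro: le_PNA_refl le_PNA_trans oplus_PNA_closed oplus_PNA_down_closed
      oplus_PNA_commute oplus_PNA_assoc oplus_PNA_unit oplus_PNA_le_left)

end
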